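(* Let $n\ge1$, $\mathcal{T}=\{v\in\mathbb{R}^{n+1}: v^0,\dots,v^n>0\}$ and $F:\mathcal{T}\to(0,\infty)$, $F(v)=(v^0v^1\cdots v^n)^{1/(n+1)}$. Then for every $v\in\mathcal{T}$ the matrix $g_{ij}(v)=\frac12\partial_i\partial_j(F^2)(v)$ has Lorentzian signature $(+,-,\dots,-)$, and the fundamental inequality $\frac{\partial F}{\partial v^i}(v)w^i\ge F(w)$ for all $v,w\in\mathcal{T}$ is equivalent to the arithmetic–geometric mean inequality $$\frac{a_0+a_1+\dots+a_n}{n+1}\ge (a_0a_1\cdots a_n)^{1/(n+1)}\quad\text{for all } a_0,\dots,a_n>0,$$ which therefore holds.
   Context: Summation convention over repeated indices $i=0,\dots,n$. *)

theory Defs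
  imports "HOL-Analysis.Analysis" "Jordan_Normal_Form.Char_Poly"
begin

text \<open>Vectors of R^(n+1) are represented as functions nat => real; only the
components 0..n are used.\<close>

definition posCone :: "nat \<Rightarrow> (nat \<Rightarrow> real) set" where
  "posCone n = {v. \<forall>i\<le>n. v i > 0}"

definition geoF :: "nat \<Rightarrow> (nat \<Rightarrow> real) \<Rightarrow> real" where
  "geoF n v = (\<Prod>i\<le>n. v i) powr (1 / real (n + 1))"

definition pdiff :: "nat \<Rightarrow> ((nat \<Rightarrow> real) \<Rightarrow> real) \<Rightarrow> (nat \<Rightarrow> real) \<Rightarrow> real" where
  "pdiff i f v = deriv (\<lambda>t. f (v(i := t))) (v i)"

definition metric_g :: "nat \<Rightarrow> (nat \<Rightarrow> real) \<Rightarrow> real mat" where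
  "metric_g n v = mat (n + 1) (n + 1)
     (\<lambda>(i, j). (1/2) * pdiff i (pdiff j (\<lambda>u. (geoF n u)^2)) v)"

definition has_signature :: "real mat \<Rightarrow> nat \<Rightarrow> nat \<Rightarrow> bool" where
  "has_signature A p q \<longleftrightarrow>
     (\<Sum>x\<in>{x. x > 0 \<and> poly (char_poly A) x = 0}. order x (char_poly A)) = p \<and>
     (\<Sum>x\<in>{x. x < 0 \<and> poly (char_poly A) x = 0}. order x (char_poly A)) = q"

definition lorentzian :: "nat \<Rightarrow> real mat \<Rightarrow> bool" where
  "lorentzian n A \<longleftrightarrow> has_signature A 1 n"

definition fundamental_ineq :: "nat \<Rightarrow> bool" where
  "fundamental_ineq n \<longleftrightarrow>
     (\<forall>v\<in>posCone n. \<forall>w\<in>posCone n.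
        (\<Sum>i\<le>n. pdiff i (geoF n) v * w i) \<ge> geoF n w)"

definition AM_GM :: "nat \<Rightarrow> bool" where
  "AM_GM n \<longleftrightarrow>
     (\<forall>a::nat \<Rightarrow> real. (\<forall>i\<le>n. a i > 0) \<longrightarrow>
        (\<Sum>i\<le>n. a i) / real (n + 1) \<ge> (\<Prod>i\<le>n. a i) powr (1 / real (n + 1)))"

end

theory Submission
  imports Defs
begin

text \<open>On the positive cone F^2 = (v^0 \<cdots> v^n)^a with a = 2/(n+1), so
  g = \<beta> s s^T - diag e with s_i = 1/v^i, \<beta> = a^2 F^2/2 and e_i = a F^2/(2 (v^i)^2) > 0.
  For x \<ge> 0 the characteristic polynomial of such a matrix is \<Prod> (x + e_i) times the secular
  function 1 - \<Sum> \<beta> s_i^2/(x + e_i), which is strictly increasing; here its value at 0 is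
  1 - (n+1) a = -1, so there is exactly one nonnegative root, positive and simple. As g is
  symmetric all n+1 roots are real, hence the other n are negative.
  The fundamental inequality at v is AM-GM for the numbers F(v) w^i/v^i, whose product is that
  of the w^i; at v = (1, \<dots>, 1) it is AM-GM for w itself.\<close>

lemma det_diag_minus_rank_one:
  fixes d u w :: "nat \<Rightarrow> 'a :: field"
  assumes d: "\<And>i. i < m \<Longrightarrow> d i \<noteq> 0"
  shows "Determinant.det (mat m m (\<lambda>(i, j). (if i = j then d i else 0) - u i * w j))
     = (\<Prod>i<m. d i) * (1 - (\<Sum>i<m. w i * u i / d i))"
proof -
  define D where "D = mat m m (\<lambda>(i, j). if i = j then d i else 0)"
  define D' where "D' = mat m m (\<lambda>(i, j). if i = j then 1 / d i else 0)"
  define W where "W = mat 1 m (\<lambda>(_, j). w j)"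
  define U where "U = mat m 1 (\<lambda>(i, _). u i)"
  define M where "M = mat m m (\<lambda>(i, j). (if i = j then d i else 0) - u i * w j)"
  define c where "c = mat 1 1 (\<lambda>_. 1 - (\<Sum>i<m. w i * u i / d i))"
  have car: "D \<in> carrier_mat m m" "D' \<in> carrier_mat m m" "W \<in> carrier_mat 1 m"
    "U \<in> carrier_mat m 1" "M \<in> carrier_mat m m" "c \<in> carrier_mat 1 1"
    by (auto simp: D_def D'_def W_def U_def M_def c_def)
  \<comment> \<open>Eliminate in the bordered matrix [[1, W], [U, D]] once with the pivot 1
      and once with the pivot D.\<close>
  define B where "B = four_block_mat (1\<^sub>m 1) W U D"
  define L1 where "L1 = four_block_mat (1\<^sub>m 1) (0\<^sub>m 1 m) U (1\<^sub>m m)"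
  define R1 where "R1 = four_block_mat (1\<^sub>m 1) W (0\<^sub>m m 1) M"
  define L2 where "L2 = four_block_mat (1\<^sub>m 1) (W * D') (0\<^sub>m m 1) (1\<^sub>m m)"
  define R2 where "R2 = four_block_mat c (0\<^sub>m 1 m) U D"
  have "L1 * R1 = four_block_mat (1\<^sub>m 1 * 1\<^sub>m 1 + 0\<^sub>m 1 m * 0\<^sub>m m 1) (1\<^sub>m 1 * W + 0\<^sub>m 1 m * M)
     (U * 1\<^sub>m 1 + 1\<^sub>m m * 0\<^sub>m m 1) (U * W + 1\<^sub>m m * M)"
    unfolding L1_def R1_def by (rule mult_four_block_mat) (use car in auto)
  also have "\<dots> = B"
    unfolding B_def using car
    by (intro arg_cong4[where f = four_block_mat] eq_matI)
       (auto simp: U_def W_def M_def D_def scalar_prod_def)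
  finally have B1: "B = L1 * R1" ..
  have "L2 * R2 = four_block_mat (1\<^sub>m 1 * c + (W * D') * U) (1\<^sub>m 1 * 0\<^sub>m 1 m + (W * D') * D)
     (0\<^sub>m m 1 * c + 1\<^sub>m m * U) (0\<^sub>m m 1 * 0\<^sub>m 1 m + 1\<^sub>m m * D)"
    unfolding L2_def R2_def by (rule mult_four_block_mat) (use car in auto)
  also have "\<dots> = B"
    unfolding B_def using car
    by (intro arg_cong4[where f = four_block_mat] eq_matI)
       (auto simp: U_def W_def D'_def D_def c_def scalar_prod_def atLeast0LessThan d
          mult_ac if_distrib sum.delta' cong: if_cong)
  finally have B2: "B = L2 * R2" ..
  have cb: "L1 \<in> carrier_mat (1 + m) (1 + m)" "R1 \<in> carrier_mat (1 + m) (1 + m)"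
     "L2 \<in> carrier_mat (1 + m) (1 + m)" "R2 \<in> carrier_mat (1 + m) (1 + m)"
    unfolding L1_def R1_def L2_def R2_def using car by auto
  have "Determinant.det L1 = 1"
    unfolding L1_def by (subst det_four_block_mat_upper_right_zero[of _ 1 _ m]) (use car in auto)
  moreover have "Determinant.det R1 = Determinant.det M"
    unfolding R1_def by (subst det_four_block_mat_lower_left_zero[of _ 1 _ m]) (use car in auto)
  moreover have "Determinant.det L2 = 1"
    unfolding L2_def by (subst det_four_block_mat_lower_left_zero[of _ 1 _ m]) (use car in auto)
  moreover have "Determinant.det D = (\<Prod>i<m. d i)"
    by (subst det_upper_triangular[of _ m])
       (auto simp: D_def upper_triangular_def prod_list_diag_prod atLeast0LessThan)
  then have "Determinant.det R2 = (1 - (\<Sum>i<m. w i * u i / d i)) * (\<Prod>i<m. d i)"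
    unfolding R2_def
    by (subst det_four_block_mat_upper_right_zero[of _ 1 _ m]) (use car in \<open>auto simp: det_single c_def\<close>)
  ultimately have "Determinant.det M = (1 - (\<Sum>i<m. w i * u i / d i)) * (\<Prod>i<m. d i)"
    using B1 B2 det_mult[OF cb(1,2)] det_mult[OF cb(3,4)] by simp
  then show ?thesis
    unfolding M_def by (simp add: mult.commute)
qed

interpretation of_real_poly_hom: map_poly_inj_comm_ring_hom "of_real :: real \<Rightarrow> complex" ..

lemma eigenvalue_real_if_symmetric:
  fixes A :: "real mat"
  assumes A: "A \<in> carrier_mat m m"
    and sym: "\<And>i j. i < m \<Longrightarrow> j < m \<Longrightarrow> A $$ (i, j) = A $$ (j, i)"
    and root: "poly (char_poly (map_mat complex_of_real A)) k = 0"
  shows "k \<in> \<real>"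
proof -
  define Ac where "Ac = map_mat complex_of_real A"
  have Ac: "Ac \<in> carrier_mat m m" using A by (auto simp: Ac_def)
  have "eigenvalue Ac k" using root eigenvalue_root_char_poly[OF Ac] by (simp add: Ac_def)
  then obtain v where "eigenvector Ac v k" unfolding eigenvalue_def by blast
  then have v: "v \<in> carrier_vec m" "v \<noteq> 0\<^sub>v m" "Ac *\<^sub>v v = k \<cdot>\<^sub>v v"
    using Ac unfolding eigenvector_def by auto
  have eigen: "(\<Sum>j<m. of_real (A $$ (i, j)) * v $ j) = k * v $ i" if "i < m" for i
  proof -
    have "(Ac *\<^sub>v v) $ i = (k \<cdot>\<^sub>v v) $ i" using v by simp
    then show ?thesis using that A v by (simp add: Ac_def scalar_prod_def atLeast0LessThan row_def)
  qed
  \<comment> \<open>The Hermitian form of v is real because A is real symmetric, and it equals k times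
      the positive squared norm of v.\<close>
  define S where "S = (\<Sum>i<m. cnj (v $ i) * (\<Sum>j<m. of_real (A $$ (i, j)) * v $ j))"
  define N where "N = (\<Sum>i<m. (cmod (v $ i))\<^sup>2)"
  have "S = k * of_real N"
  proof -
    have "S = (\<Sum>i<m. cnj (v $ i) * (k * v $ i))"
      unfolding S_def by (intro sum.cong) (simp_all add: eigen)
    also have "\<dots> = k * of_real N"
      unfolding N_def of_real_sum sum_distrib_left
      by (intro sum.cong refl) (simp only: complex_norm_square mult_ac)
    finally show ?thesis .
  qed
  moreover have "cnj S = S"
  proof -
    have "cnj S = (\<Sum>i<m. \<Sum>j<m. v $ i * of_real (A $$ (i, j)) * cnj (v $ j))"
      unfolding S_def by (simp add: sum_distrib_left mult_ac)
    also have "\<dots> = (\<Sum>j<m. \<Sum>i<m. v $ i * of_real (A $$ (i, j)) * cnj (v $ j))"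
      by (rule sum.swap)
    also have "\<dots> = S"
      unfolding S_def by (intro sum.cong refl) (simp add: sum_distrib_left mult_ac sym)
    finally show ?thesis .
  qed
  moreover have "N > 0"
  proof -
    obtain i where "i < m" "v $ i \<noteq> 0"
      using v(1,2) by (metis carrier_vecD eq_vecI index_zero_vec)
    then show ?thesis unfolding N_def by (intro sum_pos2[of _ i]) auto
  qed
  ultimately have "cnj k = k"
    by (metis complex_cnj_complex_of_real complex_cnj_mult mult_cancel_right of_real_eq_0_iff
        less_irrefl)
  then show ?thesis by (simp add: Reals_cnj_iff)
qed

lemma char_poly_symmetric_splits:
  fixes A :: "real mat"
  assumes A: "A \<in> carrier_mat m m"
    and sym: "\<And>i j. i < m \<Longrightarrow> j < m \<Longrightarrow> A $$ (i, j) = A $$ (j, i)"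
  shows "\<exists>ts. char_poly A = (\<Prod>t\<leftarrow>ts. [:- t, 1:]) \<and> length ts = m"
proof -
  define Ac where "Ac = map_mat complex_of_real A"
  have Ac: "Ac \<in> carrier_mat m m" using A by (auto simp: Ac_def)
  obtain as where as: "char_poly Ac = (\<Prod>a\<leftarrow>as. [:- a, 1:])" "length as = m"
    using char_poly_factorized[OF Ac] by blast
  have "a = of_real (Re a)" if "a \<in> set as" for a
  proof -
    have "poly (char_poly Ac) a = 0" unfolding as(1) using that by (induct as) auto
    then have "a \<in> \<real>" using eigenvalue_real_if_symmetric[OF A sym] by (simp add: Ac_def)
    then show ?thesis by (simp add: complex_is_Real_iff complex_eq_iff)
  qed
  then have "(\<Prod>a\<leftarrow>as. [:- a, 1:]) = map_poly of_real (\<Prod>t\<leftarrow>map Re as. [:- t, 1:])"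
    by (simp add: of_real_poly_hom.hom_prod_list o_def cong: map_cong)
  moreover have "map_poly of_real (char_poly A) = char_poly Ac"
    unfolding Ac_def using of_real_hom.char_poly_hom[OF A, where 'a = complex] by simp
  ultimately have "char_poly A = (\<Prod>t\<leftarrow>map Re as. [:- t, 1:])"
    using as(1) of_real_poly_hom.injectivity by metis
  then show ?thesis using as(2) by (intro exI[of _ "map Re as"]) simp
qed

lemma order_prod_linear_factors:
  fixes ts :: "'a :: idom list"
  shows "order x (\<Prod>t\<leftarrow>ts. [:- t, 1:]) = count_list ts x"
proof -
  have "order x (\<Prod>t\<leftarrow>ts. [:- t, 1:]) = (\<Sum>t\<leftarrow>ts. if t = x then 1 else 0)"
    by (subst order_prod_list) (auto simp: o_def order_linear')
  also have "\<dots> = count_list ts x"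
    by (induct ts) auto
  finally show ?thesis .
qed

lemma poly_prod_linear_factors_eq_0_iff:
  fixes ts :: "'a :: idom list"
  shows "poly (\<Prod>t\<leftarrow>ts. [:- t, 1:]) x = 0 \<longleftrightarrow> x \<in> set ts"
  by (induct ts) auto

lemma has_signature_if_char_poly_splits:
  assumes "char_poly A = (\<Prod>t\<leftarrow>ts. [:- t, 1:])"
  shows "has_signature A (length (filter (\<lambda>x. x > 0) ts)) (length (filter (\<lambda>x. x < 0) ts))"
proof -
  have "(\<Sum>x\<in>{x. P x \<and> poly (char_poly A) x = 0}. order x (char_poly A)) = length (filter P ts)"
    for P
  proof -
    have "(\<Sum>x\<in>{x. P x \<and> poly (char_poly A) x = 0}. order x (char_poly A))
        = (\<Sum>x\<in>set (filter P ts). count_list (filter P ts) x)"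
      unfolding assms order_prod_linear_factors poly_prod_linear_factors_eq_0_iff
      by (intro sum.cong)
         (auto simp: count_list_eq_length_filter filter_filter
           intro!: arg_cong[where f = length] filter_cong)
    also have "\<dots> = length (filter P ts)"
      by (rule sum_count_set) auto
    finally show ?thesis .
  qed
  then show ?thesis unfolding has_signature_def by simp
qed

lemma order_eq_1_if_simple_root:
  fixes p :: "'a :: {idom, semiring_char_0} poly"
  assumes "poly p x = 0" and "poly (pderiv p) x \<noteq> 0"
  shows "order x p = 1"
proof -
  have "p \<noteq> 0" using assms(2) by auto
  then show ?thesis using order_pderiv[OF _ assms(1)] order_0I[OF assms(2)] by simp
qed

locale rank_one_minus_pos_diag =
  fixes m :: nat and \<beta> :: real and s e :: "nat \<Rightarrow> real"
  assumes m_pos: "m > 0" and \<beta>_pos: "\<beta> > 0"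
    and e_pos: "\<And>i. i < m \<Longrightarrow> e i > 0" and s_nonzero: "\<And>i. i < m \<Longrightarrow> s i \<noteq> 0"
begin

definition M :: "real mat" where
  "M = mat m m (\<lambda>(i, j). \<beta> * s i * s j - (if i = j then e i else 0))"

definition secular :: "real \<Rightarrow> real" where
  "secular x = 1 - (\<Sum>i<m. \<beta> * (s i)\<^sup>2 / (x + e i))"

lemma M_carrier: "M \<in> carrier_mat m m"
  by (simp add: M_def)

lemma M_symmetric: "i < m \<Longrightarrow> j < m \<Longrightarrow> M $$ (i, j) = M $$ (j, i)"
  by (simp add: M_def)

lemma shift_pos: "x \<ge> 0 \<Longrightarrow> i < m \<Longrightarrow> x + e i > 0"
  using e_pos by (simp add: add_nonneg_pos)

lemma shifted_prod_pos: "x \<ge> 0 \<Longrightarrow> (\<Prod>i<m. x + e i) > 0"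
  using shift_pos by (intro prod_pos) simp

lemma poly_char_poly_M:
  assumes "x \<ge> 0"
  shows "poly (char_poly M) x = (\<Prod>i<m. x + e i) * secular x"
proof -
  have "- char_matrix M x = mat m m (\<lambda>(i, j). (if i = j then x + e i else 0) - \<beta> * s i * s j)"
    by (rule eq_matI) (auto simp: M_def char_matrix_def)
  moreover have "\<And>i. i < m \<Longrightarrow> x + e i \<noteq> 0"
    using shift_pos[OF assms] by fastforce
  ultimately show ?thesis
    unfolding char_poly_matrix[OF M_carrier] secular_def
    using det_diag_minus_rank_one[of m "\<lambda>i. x + e i" "\<lambda>i. \<beta> * s i" s]
    by (simp add: power2_eq_square mult_ac)
qed

lemma secular_strict_mono:
  assumes "0 \<le> x" "x < y"
  shows "secular x < secular y"
proof -
  have "(\<Sum>i<m. \<beta> * (s i)\<^sup>2 / (y + e i)) < (\<Sum>i<m. \<beta> * (s i)\<^sup>2 / (x + e i))"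
  proof (rule sum_strict_mono)
    fix i assume "i \<in> {..<m}"
    then have "e i > 0" "\<beta> * (s i)\<^sup>2 > 0" using e_pos s_nonzero \<beta>_pos by auto
    then show "\<beta> * (s i)\<^sup>2 / (y + e i) < \<beta> * (s i)\<^sup>2 / (x + e i)"
      using assms by (intro divide_strict_left_mono) auto
  qed (use m_pos in auto)
  then show ?thesis unfolding secular_def by simp
qed

lemma secular_has_derivative:
  assumes "x \<ge> 0"
  shows "(secular has_real_derivative (\<Sum>i<m. \<beta> * (s i)\<^sup>2 / (x + e i)\<^sup>2)) (at x)"
proof -
  have "\<And>i. i < m \<Longrightarrow> x + e i \<noteq> 0"
    using shift_pos[OF assms] by fastforce
  then show ?thesis
    unfolding secular_def[abs_def]
    by (auto intro!: derivative_eq_intros simp: sum_negf power2_eq_square)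
qed

lemma secular_derivative_pos:
  assumes "x \<ge> 0"
  shows "(\<Sum>i<m. \<beta> * (s i)\<^sup>2 / (x + e i)\<^sup>2) > 0"
proof (rule sum_pos)
  fix i assume "i \<in> {..<m}"
  then show "\<beta> * (s i)\<^sup>2 / (x + e i)\<^sup>2 > 0"
    using shift_pos[OF assms, of i] \<beta>_pos s_nonzero[of i] by simp
qed (use m_pos in auto)

lemma secular_pos_somewhere: "\<exists>X > 0. secular X > 0"
proof -
  define X where "X = \<beta> * (\<Sum>i<m. (s i)\<^sup>2) + 1"
  have "X > 0" unfolding X_def using \<beta>_pos by (simp add: add_nonneg_pos sum_nonneg)
  have "(\<Sum>i<m. \<beta> * (s i)\<^sup>2 / (X + e i)) \<le> (\<Sum>i<m. \<beta> * (s i)\<^sup>2 / X)"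
    using \<open>X > 0\<close> \<beta>_pos e_pos by (intro sum_mono frac_le) (fastforce intro: less_imp_le)+
  also have "\<dots> < 1"
    using \<open>X > 0\<close> unfolding X_def by (simp add: sum_divide_distrib[symmetric] sum_distrib_left[symmetric])
  finally show ?thesis using \<open>X > 0\<close> unfolding secular_def by auto
qed

lemma char_poly_M_unique_positive_root:
  assumes "secular 0 < 0"
  obtains x0 where "{x. x > 0 \<and> poly (char_poly M) x = 0} = {x0}" "order x0 (char_poly M) = 1"
proof -
  have cont: "isCont secular x" if "x \<ge> 0" for x
    using secular_has_derivative[OF that] by (rule DERIV_isCont)
  obtain X where "X > 0" "secular X > 0" using secular_pos_somewhere by blast
  then obtain x0 where "0 \<le> x0" "secular x0 = 0"
    using IVT[of secular 0 0 X] assms cont by auto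
  then have "x0 > 0" using assms by (cases "x0 = 0") auto
  have roots: "poly (char_poly M) x = 0 \<longleftrightarrow> x = x0" if "x > 0" for x
  proof -
    have "poly (char_poly M) x = 0 \<longleftrightarrow> secular x = 0"
      using poly_char_poly_M[of x] shifted_prod_pos[of x] that
      by (metis less_imp_le less_irrefl mult_eq_0_iff)
    also have "\<dots> \<longleftrightarrow> x = x0"
      using secular_strict_mono[of x x0] secular_strict_mono[of x0 x] that \<open>0 \<le> x0\<close> \<open>secular x0 = 0\<close>
      by (cases x x0 rule: linorder_cases) auto
    finally show ?thesis .
  qed
  \<comment> \<open>The factor secular vanishes at x0, so the derivative of the product there is
      the other factor times secular'.\<close>
  define Q where "Q = (\<Prod>i<m. [:e i, 1:])"
  have poly_Q: "poly Q x = (\<Prod>i<m. x + e i)" for x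
    unfolding Q_def by (simp add: poly_prod add.commute)
  have "((\<lambda>x. poly Q x * secular x) has_real_derivative
          poly (pderiv Q) x0 * secular x0 + poly Q x0 * (\<Sum>i<m. \<beta> * (s i)\<^sup>2 / (x0 + e i)\<^sup>2)) (at x0)"
    by (rule DERIV_cong[OF DERIV_mult[OF poly_DERIV secular_has_derivative]])
       (use \<open>0 \<le> x0\<close> in \<open>simp_all add: algebra_simps\<close>)
  moreover have "((\<lambda>x. poly Q x * secular x) has_real_derivative poly (pderiv (char_poly M)) x0) (at x0)"
    by (rule has_field_derivative_transform_within_open[OF poly_DERIV, of "{0<..}"])
       (use \<open>x0 > 0\<close> in \<open>auto simp: poly_char_poly_M poly_Q\<close>)
  ultimately have "poly (pderiv (char_poly M)) x0 = (\<Prod>i<m. x0 + e i) * (\<Sum>i<m. \<beta> * (s i)\<^sup>2 / (x0 + e i)\<^sup>2)"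
    using DERIV_unique \<open>secular x0 = 0\<close> poly_Q by fastforce
  then have "poly (pderiv (char_poly M)) x0 \<noteq> 0"
    using shifted_prod_pos[of x0] secular_derivative_pos[of x0] \<open>0 \<le> x0\<close>
    by (metis mult_pos_pos order_less_irrefl)
  then have "order x0 (char_poly M) = 1"
    using order_eq_1_if_simple_root roots \<open>x0 > 0\<close> by blast
  moreover have "{x. x > 0 \<and> poly (char_poly M) x = 0} = {x0}"
    using roots \<open>x0 > 0\<close> by auto
  ultimately show ?thesis using that by blast
qed

theorem has_signature_M:
  assumes "secular 0 < 0"
  shows "has_signature M 1 (m - 1)"
proof -
  obtain ts where ts: "char_poly M = (\<Prod>t\<leftarrow>ts. [:- t, 1:])" "length ts = m"
    using char_poly_symmetric_splits[OF M_carrier M_symmetric] by blast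
  obtain x0 where x0: "{x. x > 0 \<and> poly (char_poly M) x = 0} = {x0}" "order x0 (char_poly M) = 1"
    using char_poly_M_unique_positive_root[OF assms] .
  have sig: "has_signature M (length (filter (\<lambda>x. x > 0) ts)) (length (filter (\<lambda>x. x < 0) ts))"
    by (rule has_signature_if_char_poly_splits[OF ts(1)])
  then have pos: "length (filter (\<lambda>x. x > 0) ts) = 1"
    using x0 unfolding has_signature_def by simp
  have "poly (char_poly M) 0 \<noteq> 0"
    using poly_char_poly_M[of 0] shifted_prod_pos[of 0] assms by (metis mult_pos_neg order_less_irrefl order_refl)
  then have "0 \<notin> set ts"
    unfolding ts(1) poly_prod_linear_factors_eq_0_iff .
  then have "filter (\<lambda>x. \<not> x < 0) ts = filter (\<lambda>x. x > 0) ts"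
    by (intro filter_cong) (auto simp: not_less order.order_iff_strict)
  then have "length (filter (\<lambda>x. x < 0) ts) = m - 1"
    using sum_length_filter_compl[of "\<lambda>x. x < 0" ts] ts(2) pos by simp
  then show ?thesis using sig pos by simp
qed

end

lemma fun_upd_in_posCone: "w \<in> posCone n \<Longrightarrow> t > 0 \<Longrightarrow> w(j := t) \<in> posCone n"
  unfolding posCone_def by auto

lemma prod_atMost_fun_upd:
  fixes w :: "nat \<Rightarrow> 'a :: comm_monoid_mult"
  assumes "j \<le> n"
  shows "(\<Prod>i\<le>n. (w(j := t)) i) = t * (\<Prod>i\<in>{..n} - {j}. w i)"
  using assms by (subst prod.remove[of "{..n}" j]) (auto intro!: prod.cong)

lemma has_real_derivative_prod_powr_coordinate:
  fixes f :: "(nat \<Rightarrow> real) \<Rightarrow> real"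
  assumes w: "w \<in> posCone n" and j: "j \<le> n"
    and f: "\<And>u. u \<in> posCone n \<Longrightarrow> f u = (\<Prod>i\<le>n. u i) powr r"
  shows "((\<lambda>t. f (w(j := t))) has_real_derivative r * f w / w j) (at (w j))"
proof -
  define Q where "Q = (\<Prod>i\<in>{..n} - {j}. w i)"
  have "Q > 0" unfolding Q_def using w by (auto simp: posCone_def intro!: prod_pos)
  have "w j > 0" using w j by (auto simp: posCone_def)
  have f_slice: "f (w(j := t)) = (t * Q) powr r" if "t > 0" for t
    using f[OF fun_upd_in_posCone[OF w that, of j]] unfolding prod_atMost_fun_upd[OF j] Q_def .
  have "((\<lambda>t. (t * Q) powr r) has_real_derivative r * (w j * Q) powr (r - 1) * Q) (at (w j))"
    using \<open>Q > 0\<close> \<open>w j > 0\<close> by (auto intro!: derivative_eq_intros)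
  also have "r * (w j * Q) powr (r - 1) * Q = r * f w / w j"
    using f_slice[OF \<open>w j > 0\<close>] \<open>Q > 0\<close> \<open>w j > 0\<close> by (simp add: powr_diff)
  finally show ?thesis
    by (rule has_field_derivative_transform_within_open[where S = "{0<..}"])
       (use f_slice \<open>w j > 0\<close> in auto)
qed

lemma pdiff_prod_powr:
  fixes f :: "(nat \<Rightarrow> real) \<Rightarrow> real"
  assumes "w \<in> posCone n" and "j \<le> n"
    and "\<And>u. u \<in> posCone n \<Longrightarrow> f u = (\<Prod>i\<le>n. u i) powr r"
  shows "pdiff j f w = r * f w / w j"
  unfolding pdiff_def using has_real_derivative_prod_powr_coordinate[OF assms] by (rule DERIV_imp_deriv)

lemma pdiff_pdiff_prod_powr:
  fixes f :: "(nat \<Rightarrow> real) \<Rightarrow> real"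
  assumes v: "v \<in> posCone n" and i: "i \<le> n" and j: "j \<le> n"
    and f: "\<And>u. u \<in> posCone n \<Longrightarrow> f u = (\<Prod>i\<le>n. u i) powr r"
  shows "pdiff i (pdiff j f) v = r * (r - (if i = j then 1 else 0)) * f v / (v i * v j)"
proof -
  have "v i > 0" "v j > 0" using v i j by (auto simp: posCone_def)
  have slice: "pdiff j f (v(i := t)) = r * f (v(i := t)) / (v(i := t)) j" if "t > 0" for t
    by (rule pdiff_prod_powr[OF fun_upd_in_posCone[OF v that] j f])
  have df: "((\<lambda>t. f (v(i := t))) has_real_derivative r * f v / v i) (at (v i))"
    by (rule has_real_derivative_prod_powr_coordinate[OF v i f])
  have "((\<lambda>t. pdiff j f (v(i := t))) has_real_derivative
          r * (r - (if i = j then 1 else 0)) * f v / (v i * v j)) (at (v i))"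
  proof (cases "i = j")
    case True
    have "((\<lambda>t. r * f (v(i := t)) / t) has_real_derivative
            (r * (r * f v / v i) * v i - r * f v) / (v i * v i)) (at (v i))"
      using DERIV_divide[OF DERIV_cmult[OF df] DERIV_ident] \<open>v i > 0\<close> by simp
    also have "(r * (r * f v / v i) * v i - r * f v) / (v i * v i)
             = r * (r - (if i = j then 1 else 0)) * f v / (v i * v j)"
      using True \<open>v i > 0\<close> by (simp add: field_simps)
    finally show ?thesis
    proof (rule has_field_derivative_transform_within_open[where S = "{0<..}"])
      fix t :: real assume "t \<in> {0<..}"
      then show "r * f (v(i := t)) / t = pdiff j f (v(i := t))"
        using slice[of t] True by (simp only: greaterThan_iff fun_upd_same)
    qed (use \<open>v i > 0\<close> in auto)
  next
    case False
    have "((\<lambda>t. r / v j * f (v(i := t))) has_real_derivative r / v j * (r * f v / v i)) (at (v i))"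
      by (rule DERIV_cmult[OF df])
    also have "r / v j * (r * f v / v i) = r * (r - (if i = j then 1 else 0)) * f v / (v i * v j)"
      using False by (simp add: mult_ac)
    finally show ?thesis
    proof (rule has_field_derivative_transform_within_open[where S = "{0<..}"])
      fix t :: real assume "t \<in> {0<..}"
      then show "r / v j * f (v(i := t)) = pdiff j f (v(i := t))"
        using slice[of t] False by (simp only: greaterThan_iff fun_upd_other mult.commute times_divide_eq_left)
    qed (use \<open>v i > 0\<close> in auto)
  qed
  then show ?thesis unfolding pdiff_def[of i] by (rule DERIV_imp_deriv)
qed

lemma geoF_pos: "v \<in> posCone n \<Longrightarrow> geoF n v > 0"
  unfolding geoF_def posCone_def by (auto intro!: prod_pos)

lemma geoF_sq: "u \<in> posCone n \<Longrightarrow> (geoF n u)\<^sup>2 = (\<Prod>i\<le>n. u i) powr (2 / real (n + 1))"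
  unfolding geoF_def posCone_def
  by (auto simp: power2_eq_square powr_add[symmetric] intro!: prod_pos)

lemma pdiff_geoF:
  assumes "v \<in> posCone n" and "i \<le> n"
  shows "pdiff i (geoF n) v = geoF n v / (real (n + 1) * v i)"
  using pdiff_prod_powr[OF assms, of "geoF n" "1 / real (n + 1)"] by (simp add: geoF_def)

lemma metric_g_eq:
  assumes v: "v \<in> posCone n"
  defines "a \<equiv> 2 / real (n + 1)" and "F \<equiv> (geoF n v)\<^sup>2"
  shows "metric_g n v = mat (n + 1) (n + 1)
           (\<lambda>(i, j). a\<^sup>2 * F / 2 * (1 / v i) * (1 / v j) - (if i = j then a * F / (2 * (v i)\<^sup>2) else 0))"
    (is "_ = ?G")
proof (rule eq_matI)
  fix i j assume "i < dim_row ?G" and "j < dim_col ?G"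
  then have ij: "i \<le> n" "j \<le> n" by auto
  then have "v i > 0" "v j > 0" using v by (auto simp: posCone_def)
  have "metric_g n v $$ (i, j) = 1 / 2 * (a * (a - (if i = j then 1 else 0)) * F / (v i * v j))"
    using ij pdiff_pdiff_prod_powr[OF v ij, of "\<lambda>u. (geoF n u)\<^sup>2" a] geoF_sq
    by (simp add: metric_g_def a_def F_def)
  then show "metric_g n v $$ (i, j) = ?G $$ (i, j)"
    using ij \<open>v i > 0\<close> \<open>v j > 0\<close>
    by (cases "i = j") (simp_all add: power2_eq_square field_simps)
qed (auto simp: metric_g_def)

lemma metric_g_lorentzian:
  assumes v: "v \<in> posCone n"
  shows "lorentzian n (metric_g n v)"
proof -
  define a where "a = 2 / real (n + 1)"
  define F where "F = (geoF n v)\<^sup>2"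
  have "a > 0" "F > 0" using geoF_pos[OF v] by (auto simp: a_def F_def)
  have vpos: "\<forall>i<n + 1. v i > 0" using v by (auto simp: posCone_def)
  interpret rank_one_minus_pos_diag "n + 1" "a\<^sup>2 * F / 2" "\<lambda>i. 1 / v i" "\<lambda>i. a * F / (2 * (v i)\<^sup>2)"
    using \<open>a > 0\<close> \<open>F > 0\<close> vpos by unfold_locales auto
  have "secular 0 = 1 - (\<Sum>i<n + 1. a)"
    unfolding secular_def using vpos \<open>a > 0\<close> \<open>F > 0\<close>
    by (intro arg_cong[where f = "\<lambda>x. 1 - x"] sum.cong) (auto simp: field_simps power2_eq_square)
  also have "\<dots> < 0" by (simp add: a_def field_simps)
  finally have "has_signature M 1 n"
    using has_signature_M by simp
  moreover have "metric_g n v = M"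
    unfolding M_def metric_g_eq[OF v] by (simp only: a_def F_def)
  ultimately show ?thesis
    unfolding lorentzian_def by simp
qed

lemma AM_GM_holds: "AM_GM n"
  unfolding AM_GM_def
proof (intro allI impI)
  fix a :: "nat \<Rightarrow> real" assume "\<forall>i\<le>n. a i > 0"
  then have "(\<Sum>i\<le>n. a i / real (card {..n})) \<ge> (\<Prod>i\<le>n. a i) powr (1 / real (card {..n}))"
    by (intro arith_geom_mean) (auto simp: less_imp_le)
  then show "(\<Sum>i\<le>n. a i) / real (n + 1) \<ge> (\<Prod>i\<le>n. a i) powr (1 / real (n + 1))"
    by (simp add: sum_divide_distrib)
qed

lemma fundamental_ineq_iff_AM_GM: "fundamental_ineq n \<longleftrightarrow> AM_GM n"
proof
  assume fund: "fundamental_ineq n"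
  show "AM_GM n"
    unfolding AM_GM_def
  proof (intro allI impI)
    fix w :: "nat \<Rightarrow> real" assume "\<forall>i\<le>n. w i > 0"
    then have "w \<in> posCone n" and one: "(\<lambda>_. 1) \<in> posCone n" by (auto simp: posCone_def)
    then have "(\<Sum>i\<le>n. pdiff i (geoF n) (\<lambda>_. 1) * w i) \<ge> geoF n w"
      using fund unfolding fundamental_ineq_def by blast
    moreover have "pdiff i (geoF n) (\<lambda>_. 1) = 1 / real (n + 1)" if "i \<le> n" for i
      using pdiff_geoF[OF one that] by (simp add: geoF_def)
    ultimately show "(\<Sum>i\<le>n. w i) / real (n + 1) \<ge> (\<Prod>i\<le>n. w i) powr (1 / real (n + 1))"
      by (simp add: geoF_def sum_divide_distrib)
  qed
next
  assume amgm: "AM_GM n"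
  show "fundamental_ineq n"
    unfolding fundamental_ineq_def
  proof (intro ballI)
    fix v w assume v: "v \<in> posCone n" and w: "w \<in> posCone n"
    define c where "c = geoF n v"
    have "c > 0" unfolding c_def using geoF_pos[OF v] .
    have vpos: "\<And>i. i \<le> n \<Longrightarrow> v i > 0" and wpos: "\<And>i. i \<le> n \<Longrightarrow> w i > 0"
      using v w by (auto simp: posCone_def)
    have "c ^ (n + 1) = c powr real (n + 1)"
      using \<open>c > 0\<close> by (rule powr_realpow[symmetric])
    also have "\<dots> = (\<Prod>i\<le>n. v i)"
      using prod_pos[of "{..n}" v] vpos unfolding c_def geoF_def by (simp add: powr_powr)
    finally have prod_eq: "(\<Prod>i\<le>n. c * w i / v i) = (\<Prod>i\<le>n. w i)"
      using vpos by (simp add: prod.distrib prod_dividef prod_pos less_imp_neq[symmetric])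
    have "(\<Sum>i\<le>n. pdiff i (geoF n) v * w i) = (\<Sum>i\<le>n. c * w i / v i) / real (n + 1)"
      by (simp add: pdiff_geoF[OF v] c_def sum_divide_distrib mult_ac)
    also have "\<dots> \<ge> (\<Prod>i\<le>n. c * w i / v i) powr (1 / real (n + 1))"
      using amgm \<open>c > 0\<close> vpos wpos unfolding AM_GM_def by (auto intro!: divide_pos_pos)
    finally show "(\<Sum>i\<le>n. pdiff i (geoF n) v * w i) \<ge> geoF n w"
      unfolding prod_eq geoF_def .
  qed
qed

theorem mainTheorem7:
  fixes n :: nat
  assumes "n \<ge> 1"
  shows "(\<forall>v\<in>posCone n. lorentzian n (metric_g n v))
         \<and> (fundamental_ineq n \<longleftrightarrow> AM_GM n)
         \<and> AM_GM n"
  using metric_g_lorentzian fundamental_ineq_iff_AM_GM AM_GM_holds by blast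

end
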